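(* Let $\Gamma$ be a simple, undirected, connected graph with $p\ge 2$ vertices and diameter $\mathrm{diam}(\Gamma)$. Then $$\gamma_{[3R]}(\Gamma)\le 3p-\frac{5\,\mathrm{diam}(\Gamma)}{3}+\frac{7}{3}.$$
   Context: The diameter is the maximum distance between two vertices. For a graph $\Gamma=(V,E)$ and $h:V\to\{0,1,2,3,4\}$, let $AN(v)=\{w\in N(v):h(w)\ge 1\}$, $AN[v]=AN(v)\cup\{v\}$ and $h(S)=\sum_{u\in S}h(u)$. $h$ is a triple Roman dominating function (3RDF) if every $v$ with $h(v)<3$ satisfies $h(AN[v])\ge|AN(v)|+3$. The triple Roman domination number $\gamma_{[3R]}(\Gamma)$ is the minimum weight $h(V)$ of a 3RDF of $\Gamma$. *)

theory Defs
  imports Complex_Main "HOL-Library.FuncSet"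
begin

definition simple_graph :: "'a set \<Rightarrow> ('a \<Rightarrow> 'a \<Rightarrow> bool) \<Rightarrow> bool" where
  "simple_graph V E \<longleftrightarrow> finite V \<and> (\<forall>u v. E u v \<longrightarrow> u \<in> V \<and> v \<in> V)
     \<and> (\<forall>u v. E u v \<longrightarrow> E v u) \<and> (\<forall>v. \<not> E v v)"

definition walk :: "'a set \<Rightarrow> ('a \<Rightarrow> 'a \<Rightarrow> bool) \<Rightarrow> 'a \<Rightarrow> 'a \<Rightarrow> nat \<Rightarrow> bool" where
  "walk V E u v n \<longleftrightarrow> (\<exists>f :: nat \<Rightarrow> 'a. f 0 = u \<and> f n = v \<and> (\<forall>i\<le>n. f i \<in> V)
      \<and> (\<forall>i<n. E (f i) (f (Suc i))))"

definition connected_graph :: "'a set \<Rightarrow> ('a \<Rightarrow> 'a \<Rightarrow> bool) \<Rightarrow> bool" where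
  "connected_graph V E \<longleftrightarrow> (\<forall>u\<in>V. \<forall>v\<in>V. \<exists>n. walk V E u v n)"

definition gdist :: "'a set \<Rightarrow> ('a \<Rightarrow> 'a \<Rightarrow> bool) \<Rightarrow> 'a \<Rightarrow> 'a \<Rightarrow> nat" where
  "gdist V E u v = (LEAST n. walk V E u v n)"

definition diameter :: "'a set \<Rightarrow> ('a \<Rightarrow> 'a \<Rightarrow> bool) \<Rightarrow> nat" where
  "diameter V E = Max {gdist V E u v | u v. u \<in> V \<and> v \<in> V}"

definition open_nbhd :: "'a set \<Rightarrow> ('a \<Rightarrow> 'a \<Rightarrow> bool) \<Rightarrow> 'a \<Rightarrow> 'a set" where
  "open_nbhd V E v = {w \<in> V. E v w}"

definition active_nbhd :: "'a set \<Rightarrow> ('a \<Rightarrow> 'a \<Rightarrow> bool) \<Rightarrow> ('a \<Rightarrow> nat) \<Rightarrow> 'a \<Rightarrow> 'a set" where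
  "active_nbhd V E h v = {w \<in> open_nbhd V E v. h w \<ge> 1}"

definition is_3RDF :: "'a set \<Rightarrow> ('a \<Rightarrow> 'a \<Rightarrow> bool) \<Rightarrow> ('a \<Rightarrow> nat) \<Rightarrow> bool" where
  "is_3RDF V E h \<longleftrightarrow> h \<in> V \<rightarrow>\<^sub>E {0..4} \<and>
     (\<forall>v\<in>V. h v < 3 \<longrightarrow>
        h v + sum h (active_nbhd V E h v) \<ge> card (active_nbhd V E h v) + 3)"

definition triple_roman_domination_number :: "'a set \<Rightarrow> ('a \<Rightarrow> 'a \<Rightarrow> bool) \<Rightarrow> nat" where
  "triple_roman_domination_number V E = (LEAST w. \<exists>h. is_3RDF V E h \<and> sum h V = w)"

end

theory Submission
  imports Defs
begin

text \<open>Take a shortest path \<open>v\<^sub>0 \<dots> v\<^sub>d\<close> between two vertices at distance \<open>d = diam(\<Gamma>)\<close>.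
  Label \<open>v\<^sub>i\<close> with 4 if \<open>i mod 3 = 1\<close> or \<open>i = d\<close> and with 0 otherwise, and every vertex off
  the path with 3. Each path vertex labelled 0 is adjacent to a path vertex labelled 4, so
  this is a 3RDF, of weight \<open>4\<lfloor>(d+1)/3\<rfloor> + 4 + 3(p - d - 1)\<close>; the bound follows from
  \<open>3\<lfloor>(d+1)/3\<rfloor> \<le> d + 1\<close>.\<close>

lemma walk_shortcut:
  assumes f: "f 0 = u" "f n = v" "\<forall>i\<le>n. f i \<in> V" "\<forall>i<n. E (f i) (f (Suc i))"
    and ij: "i < j" "j \<le> n" "f i = f j"
  shows "walk V E u v (n - (j - i))"
proof -
  define g where "g k = (if k \<le> i then f k else f (k + (j - i)))" for k
  have "g 0 = u" using f by (simp add: g_def)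
  moreover have "g (n - (j - i)) = v"
    using f ij by (cases "j = n") (auto simp: g_def)
  moreover have "\<forall>k\<le>n - (j - i). g k \<in> V" using f ij by (auto simp: g_def)
  moreover have "E (g k) (g (Suc k))" if k: "k < n - (j - i)" for k
  proof -
    consider "k < i" | "k = i" | "i < k" by linarith
    then show ?thesis
    proof cases
      case 3
      then have "g k = f (k + (j - i))" "g (Suc k) = f (Suc (k + (j - i)))"
        by (auto simp: g_def)
      with f k show ?thesis by simp
    qed (use f ij k in \<open>auto simp: g_def\<close>)
  qed
  ultimately show ?thesis unfolding walk_def by blast
qed

lemma gdist_le_walk: "walk V E u v n \<Longrightarrow> gdist V E u v \<le> n"
  unfolding gdist_def by (rule Least_le)

lemma walk_gdist:
  assumes "connected_graph V E" "u \<in> V" "v \<in> V"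
  shows "walk V E u v (gdist V E u v)"
  using assms unfolding connected_graph_def gdist_def by (blast intro: LeastI_ex)

lemma shortest_walk_inj_on:
  assumes f: "f 0 = u" "f n = v" "\<forall>i\<le>n. f i \<in> V" "\<forall>i<n. E (f i) (f (Suc i))"
    and shortest: "n = gdist V E u v"
  shows "inj_on f {..n}"
proof -
  have False if "i < j" "j \<le> n" "f i = f j" for i j
    using gdist_le_walk[OF walk_shortcut[OF f that]] shortest that by linarith
  then show ?thesis
    by (metis atMost_iff inj_onI linorder_neqE_nat)
qed

lemma diameter_attained:
  assumes "finite V" "V \<noteq> {}"
  obtains u v where "u \<in> V" "v \<in> V" "diameter V E = gdist V E u v"
proof -
  let ?D = "{gdist V E u v | u v. u \<in> V \<and> v \<in> V}"
  have "?D = (\<lambda>(u, v). gdist V E u v) ` (V \<times> V)" by auto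
  then have "finite ?D" "?D \<noteq> {}" using assms by auto
  then have "diameter V E \<in> ?D" unfolding diameter_def by (rule Max_in)
  then show ?thesis using that by blast
qed

lemma diametral_path_exists:
  assumes "finite V" "V \<noteq> {}" "connected_graph V E"
  obtains f where "f ` {..diameter V E} \<subseteq> V" "\<forall>i<diameter V E. E (f i) (f (Suc i))"
    "inj_on f {..diameter V E}"
proof -
  obtain u v where uv: "u \<in> V" "v \<in> V" "diameter V E = gdist V E u v"
    using diameter_attained[OF assms(1,2)] .
  then obtain f where f: "f 0 = u" "f (diameter V E) = v" "\<forall>i\<le>diameter V E. f i \<in> V"
    "\<forall>i<diameter V E. E (f i) (f (Suc i))"
    using walk_gdist[OF assms(3)] unfolding walk_def by metis
  show ?thesis
    using that f shortest_walk_inj_on[OF f uv(3)] by blast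
qed

lemma is_3RDF_if_neighbour_compensates:
  assumes "finite V" "h \<in> V \<rightarrow>\<^sub>E {0..4}"
    and compensate: "\<And>v. v \<in> V \<Longrightarrow> h v < 3 \<Longrightarrow> \<exists>w\<in>V. E v w \<and> h v + h w \<ge> 4"
  shows "is_3RDF V E h"
  unfolding is_3RDF_def
proof (intro conjI ballI impI)
  fix v assume "v \<in> V" "h v < 3"
  then obtain w where w: "w \<in> V" "E v w" "h v + h w \<ge> 4" using compensate by blast
  let ?A = "active_nbhd V E h v"
  have "w \<in> ?A" using w \<open>h v < 3\<close> unfolding active_nbhd_def open_nbhd_def by simp
  moreover have "finite ?A"
    using \<open>finite V\<close> unfolding active_nbhd_def open_nbhd_def by simp
  moreover have "card (?A - {w}) \<le> sum h (?A - {w})"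
    using sum_mono[of "?A - {w}" "\<lambda>_. 1" h] unfolding active_nbhd_def by auto
  ultimately show "card ?A + 3 \<le> h v + sum h ?A"
    using w(3) by (simp add: sum.remove card_Suc_Diff1)
qed (use assms in auto)

lemma triple_roman_domination_number_le:
  "is_3RDF V E h \<Longrightarrow> triple_roman_domination_number V E \<le> sum h V"
  unfolding triple_roman_domination_number_def by (blast intro: Least_le)

lemma sum_if_mod_3_eq_1:
  "(\<Sum>i<d. if i mod 3 = 1 then c else 0) = c * ((d + 1) div 3)" for c :: nat
proof (induction d)
  case (Suc d)
  have "(Suc d + 1) div 3 = (d + 1) div 3 + (if d mod 3 = 1 then 1 else 0)" by presburger
  with Suc show ?case by simp
qed simp

text \<open>Off \<open>V\<close> the value is \<open>undefined\<close> because \<open>is_3RDF\<close> asks for an extensional function.\<close>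
definition path_labelling :: "'a set \<Rightarrow> (nat \<Rightarrow> 'a) \<Rightarrow> nat \<Rightarrow> 'a \<Rightarrow> nat" where
  "path_labelling V f d x =
     (if x \<notin> V then undefined
      else if x \<notin> f ` {..d} then 3
      else if x \<in> f ` {i. i \<le> d \<and> (i mod 3 = 1 \<or> i = d)} then 4 else 0)"

context
  fixes V :: "'a set" and E :: "'a \<Rightarrow> 'a \<Rightarrow> bool" and f :: "nat \<Rightarrow> 'a" and d :: nat
  assumes path_in: "f ` {..d} \<subseteq> V"
    and path_edges: "\<forall>i<d. E (f i) (f (Suc i))"
    and path_inj: "inj_on f {..d}"
begin

lemma path_labelling_on_path:
  assumes "i \<le> d"
  shows "path_labelling V f d (f i) = (if i mod 3 = 1 \<or> i = d then 4 else 0)"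
proof -
  have "f i \<in> f ` {i. i \<le> d \<and> (i mod 3 = 1 \<or> i = d)} \<longleftrightarrow> i mod 3 = 1 \<or> i = d"
    using assms path_inj by (auto dest: inj_onD)
  then show ?thesis
    using assms path_in unfolding path_labelling_def by auto
qed

lemma path_labelling_is_3RDF:
  assumes "finite V" and sym: "\<And>u v. E u v \<Longrightarrow> E v u"
  shows "is_3RDF V E (path_labelling V f d)"
proof (rule is_3RDF_if_neighbour_compensates[OF \<open>finite V\<close>])
  show "path_labelling V f d \<in> V \<rightarrow>\<^sub>E {0..4}"
    unfolding path_labelling_def by auto
next
  fix x assume "x \<in> V" and less_3: "path_labelling V f d x < 3"
  then have "x \<in> f ` {..d}"
    by (cases "x \<in> f ` {..d}") (simp_all add: path_labelling_def)
  then obtain i where i: "i \<le> d" "x = f i" by blast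
  with less_3 have not_4: "\<not> (i mod 3 = 1 \<or> i = d)" and x_0: "path_labelling V f d x = 0"
    using path_labelling_on_path[of i] by (auto split: if_splits)
  \<comment> \<open>the neighbour labelled 4 is \<open>f (i + 1)\<close> or \<open>f (i - 1)\<close>, whichever has index \<open>\<equiv> 1 (mod 3)\<close>\<close>
  obtain j where j: "j \<le> d" "j mod 3 = 1" "E x (f j)"
  proof (cases "i mod 3 = 0")
    case True
    then have "Suc i mod 3 = 1" by presburger
    moreover have "i < d" using i(1) not_4 by auto
    ultimately show ?thesis using path_edges i(2) by (intro that[of "Suc i"]) auto
  next
    case False
    with not_4 obtain k where k: "i = Suc k" "k mod 3 = 1"
      by (cases i) (auto simp: mod_Suc split: if_splits)
    with i(1) have "k < d" by simp
    with path_edges have "E (f k) (f (Suc k))" by blast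
    with k i show ?thesis using sym by (intro that[of k]) auto
  qed
  moreover have "f j \<in> V" "path_labelling V f d (f j) = 4"
    using path_in path_labelling_on_path j by auto
  ultimately show "\<exists>w\<in>V. E x w \<and> path_labelling V f d x + path_labelling V f d w \<ge> 4"
    using x_0 by auto
qed

lemma sum_path_labelling:
  assumes "finite V"
  shows "sum (path_labelling V f d) V = 4 * ((d + 1) div 3) + 4 + 3 * (card V - (d + 1))"
proof -
  let ?h = "path_labelling V f d" and ?P = "f ` {..d}"
  have "sum ?h ?P = (\<Sum>i\<le>d. if i mod 3 = 1 \<or> i = d then 4 else 0)"
    using path_inj path_labelling_on_path by (simp add: sum.reindex)
  also have "\<dots> = (\<Sum>i<d. if i mod 3 = 1 then 4 else 0) + 4"
    by (simp add: lessThan_Suc_atMost[symmetric])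
  also have "\<dots> = 4 * ((d + 1) div 3) + 4"
    by (simp only: sum_if_mod_3_eq_1)
  finally have on_path: "sum ?h ?P = 4 * ((d + 1) div 3) + 4" .
  have off_path: "sum ?h (V - ?P) = 3 * card (V - ?P)"
    by (simp add: path_labelling_def)
  have "card ?P = d + 1" using path_inj by (simp add: card_image)
  then have "card (V - ?P) = card V - (d + 1)"
    using path_in assms by (simp add: card_Diff_subset finite_subset)
  then show ?thesis
    using sum.subset_diff[OF path_in assms, of ?h] on_path off_path by simp
qed

end

theorem proposition23:
  fixes V :: "'a set" and E :: "'a \<Rightarrow> 'a \<Rightarrow> bool"
  assumes "simple_graph V E" and "connected_graph V E" and "card V \<ge> 2"
  shows "real (triple_roman_domination_number V E)
           \<le> 3 * real (card V) - 5 * real (diameter V E) / 3 + 7 / 3"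
proof -
  have fin: "finite V" and sym: "\<And>u v. E u v \<Longrightarrow> E v u"
    using assms(1) unfolding simple_graph_def by auto
  have "V \<noteq> {}" using assms(3) by auto
  let ?d = "diameter V E"
  obtain f where path: "f ` {..?d} \<subseteq> V" "\<forall>i<?d. E (f i) (f (Suc i))" "inj_on f {..?d}"
    using diametral_path_exists[OF fin \<open>V \<noteq> {}\<close> assms(2)] .
  have "?d + 1 \<le> card V"
    using card_mono[OF fin path(1)] card_image[OF path(3)] by simp
  moreover have "3 * ((?d + 1) div 3) \<le> ?d + 1" by simp
  moreover have "triple_roman_domination_number V E
      \<le> 4 * ((?d + 1) div 3) + 4 + 3 * (card V - (?d + 1))"
    using triple_roman_domination_number_le[OF path_labelling_is_3RDF[OF path fin sym]]
      sum_path_labelling[OF path fin] by simp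
  ultimately have "3 * triple_roman_domination_number V E + 5 * ?d \<le> 9 * card V + 7"
    by linarith
  then show ?thesis by linarith
qed

end
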